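(* Let $M$ be a matroid on $E$ whose dual is transversal with presentation $\mathcal A=(A_1,\ldots,A_r)$, $r=r^*(M)$; let $e\in E$ and let $G$ be a minimal $(e,\mathcal A)$-presenting graph on vertex set $\mathcal A_e(E)$ for which the identity map is the presenting map. Let $i\in[r]$ and $\mathcal A'=(A_1,\ldots,A_{i-1},\mathrm{cl}_M(A_i),A_{i+1},\ldots,A_r)$. Define a graph $G'$ by: (i) if $e\notin\mathrm{cl}_M(A_i)-A_i$, then $G'=G$; (ii) if $e\in\mathrm{cl}_M(A_i)-A_i$, then $G'$ is obtained from $G$ by adding a vertex $i$ and an edge from $i$ to exactly one $j\in\mathcal A_e(\mathrm{cl}_M(A_i))$. Then $G'$ is a minimal $(e,\mathcal A')$-presenting graph (with the identity map as presenting map).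
   Context: $M^*=M[\mathcal A]$, the transversal matroid whose independent sets are the partial transversals of $\mathcal A$. For any sequence $\mathcal B=(B_1,\ldots,B_r)$ of subsets of $E$ and $X\subseteq E$: $\mathcal B(X)=\{i:B_i\subseteq X\}$, $\mathcal B_e(X)=\{i\in\mathcal B(X): e\in B_i\}$. For $U$ a vertex subset, $G[U]$ is the induced subgraph. A graph $H$ with vertex set $\mathcal B_e(E)$ is $(e,\mathcal B)$-presenting if for all distinct $i,j\in\mathcal B_e(E)$ the graph $H[\mathcal B_e(\mathrm{cl}_M(B_i\cup B_j))]$ is connected (closures taken in $M$); it is minimal if deleting any one edge yields a graph that is not $(e,\mathcal B)$-presenting. *)

theory Defs
  imports Main
begin

definition matroid :: "'a set \<Rightarrow> ('a set \<Rightarrow> bool) \<Rightarrow> bool" where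
  "matroid E indep \<longleftrightarrow> finite E \<and> indep {} \<and>
     (\<forall>I. indep I \<longrightarrow> I \<subseteq> E) \<and>
     (\<forall>I J. indep J \<and> I \<subseteq> J \<longrightarrow> indep I) \<and>
     (\<forall>I J. indep I \<and> indep J \<and> card I < card J \<longrightarrow> (\<exists>x\<in>J - I. indep (insert x I)))"

definition rk :: "('a set \<Rightarrow> bool) \<Rightarrow> 'a set \<Rightarrow> nat" where
  "rk indep X = Max {card I | I. I \<subseteq> X \<and> indep I}"

definition cl :: "'a set \<Rightarrow> ('a set \<Rightarrow> bool) \<Rightarrow> 'a set \<Rightarrow> 'a set" where
  "cl E indep X = {x \<in> E. rk indep (insert x X) = rk indep X}"

definition basis :: "('a set \<Rightarrow> bool) \<Rightarrow> 'a set \<Rightarrow> 'a set \<Rightarrow> bool" where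
  "basis indep E B \<longleftrightarrow> indep B \<and> B \<subseteq> E \<and> (\<forall>x\<in>E - B. \<not> indep (insert x B))"

definition dual_indep :: "'a set \<Rightarrow> ('a set \<Rightarrow> bool) \<Rightarrow> 'a set \<Rightarrow> bool" where
  "dual_indep E indep I \<longleftrightarrow> I \<subseteq> E \<and> (\<exists>B. basis indep E B \<and> B \<subseteq> E - I)"

definition partial_transversal :: "'a set \<Rightarrow> nat \<Rightarrow> (nat \<Rightarrow> 'a set) \<Rightarrow> 'a set \<Rightarrow> bool" where
  "partial_transversal E r A X \<longleftrightarrow> X \<subseteq> E \<and>
     (\<exists>f. inj_on f X \<and> f ` X \<subseteq> {1..r} \<and> (\<forall>x\<in>X. x \<in> A (f x)))"

definition dual_presentation :: "'a set \<Rightarrow> ('a set \<Rightarrow> bool) \<Rightarrow> nat \<Rightarrow> (nat \<Rightarrow> 'a set) \<Rightarrow> bool" where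
  "dual_presentation E indep r A \<longleftrightarrow>
     (\<forall>i\<in>{1..r}. A i \<subseteq> E) \<and>
     (\<forall>X. dual_indep E indep X \<longleftrightarrow> partial_transversal E r A X) \<and>
     r = rk (dual_indep E indep) E"

definition idxB :: "nat \<Rightarrow> (nat \<Rightarrow> 'a set) \<Rightarrow> 'a set \<Rightarrow> nat set" where
  "idxB r B X = {i \<in> {1..r}. B i \<subseteq> X}"

definition idxBe :: "nat \<Rightarrow> (nat \<Rightarrow> 'a set) \<Rightarrow> 'a \<Rightarrow> 'a set \<Rightarrow> nat set" where
  "idxBe r B e X = {i \<in> idxB r B X. e \<in> B i}"

definition graph_on :: "nat set \<Rightarrow> nat set set \<Rightarrow> bool" where
  "graph_on V Ed \<longleftrightarrow> (\<forall>ed\<in>Ed. \<exists>u v. ed = {u, v} \<and> u \<noteq> v \<and> u \<in> V \<and> v \<in> V)"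

definition induced_connected :: "nat set set \<Rightarrow> nat set \<Rightarrow> bool" where
  "induced_connected Ed U \<longleftrightarrow>
     (\<forall>u\<in>U. \<forall>v\<in>U. (u, v) \<in> {(x, y). x \<in> U \<and> y \<in> U \<and> {x, y} \<in> Ed}\<^sup>*)"

definition presenting ::
  "'a set \<Rightarrow> ('a set \<Rightarrow> bool) \<Rightarrow> nat \<Rightarrow> (nat \<Rightarrow> 'a set) \<Rightarrow> 'a \<Rightarrow> nat set set \<Rightarrow> bool" where
  "presenting E indep r B e Ed \<longleftrightarrow>
     graph_on (idxBe r B e E) Ed \<and>
     (\<forall>i\<in>idxBe r B e E. \<forall>j\<in>idxBe r B e E. i \<noteq> j \<longrightarrow>
        induced_connected Ed (idxBe r B e (cl E indep (B i \<union> B j))))"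

definition minimal_presenting ::
  "'a set \<Rightarrow> ('a set \<Rightarrow> bool) \<Rightarrow> nat \<Rightarrow> (nat \<Rightarrow> 'a set) \<Rightarrow> 'a \<Rightarrow> nat set set \<Rightarrow> bool" where
  "minimal_presenting E indep r B e Ed \<longleftrightarrow>
     presenting E indep r B e Ed \<and> (\<forall>ed\<in>Ed. \<not> presenting E indep r B e (Ed - {ed}))"

end

theory Submission
  imports Defs
begin

text \<open>Replacing \<open>A\<^sub>i\<close> by \<open>C = cl(A\<^sub>i)\<close> does not change which flats contain the
  \<open>i\<close>-th set, because \<open>C \<subseteq> F \<longleftrightarrow> A\<^sub>i \<subseteq> F\<close> for a flat \<open>F\<close>.  Being \<open>(e,\<B>)\<close>-presenting
  depends only on the index sets \<open>\<B>\<^sub>e(F)\<close> of flats \<open>F\<close>, since a flat containing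
  \<open>B\<^sub>k \<union> B\<^sub>l\<close> contains \<open>cl(B\<^sub>k \<union> B\<^sub>l)\<close>.  Hence \<open>\<A>'\<^sub>e(F) = \<A>\<^sub>e(F)\<close> for every flat unless
  \<open>e \<in> C - A\<^sub>i\<close>; in that case \<open>i\<close> is a new vertex, lying in \<open>\<A>'\<^sub>e(F)\<close> exactly when
  \<open>A\<^sub>i \<subseteq> F\<close>, and then \<open>A\<^sub>j \<subseteq> C \<subseteq> F\<close> puts \<open>j\<close> into \<open>\<A>\<^sub>e(F)\<close> as well.  So \<open>{i,j}\<close> is a
  pendant edge attaching \<open>i\<close> to every induced subgraph that contains it: contracting it
  shows that the other edges of \<open>G\<close> remain necessary, and deleting it isolates \<open>i\<close> in
  \<open>\<A>'\<^sub>e(cl(A'\<^sub>i \<union> A'\<^sub>j))\<close>.\<close>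

lemma matroid_finite: "matroid E indep \<Longrightarrow> finite E"
  unfolding matroid_def by blast

lemma matroid_indep_empty: "matroid E indep \<Longrightarrow> indep {}"
  unfolding matroid_def by blast

lemma matroid_indep_subset: "matroid E indep \<Longrightarrow> indep J \<Longrightarrow> I \<subseteq> J \<Longrightarrow> indep I"
  unfolding matroid_def by blast

lemma matroid_augment:
  "matroid E indep \<Longrightarrow> indep I \<Longrightarrow> indep J \<Longrightarrow> card I < card J \<Longrightarrow> \<exists>x\<in>J - I. indep (insert x I)"
  unfolding matroid_def by blast

lemma finite_indep_cards:
  "finite X \<Longrightarrow> finite {card I | I. I \<subseteq> X \<and> indep I}"
  by (rule finite_subset[of _ "card ` Pow X"]) auto

lemma card_le_rk:
  assumes "finite X" "indep J" "J \<subseteq> X"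
  shows "card J \<le> rk indep X"
  unfolding rk_def using assms by (intro Max_ge finite_indep_cards) auto

lemma rk_basis:
  assumes m: "matroid E indep" and X: "X \<subseteq> E" and B: "basis indep X I"
  shows "rk indep X = card I"
proof -
  have "card J \<le> card I" if "J \<subseteq> X" "indep J" for J
  proof (rule ccontr)
    assume "\<not> card J \<le> card I"
    then obtain x where "x \<in> J - I" "indep (insert x I)"
      using matroid_augment[OF m _ \<open>indep J\<close>] B unfolding basis_def by (meson not_le)
    then show False using B that unfolding basis_def by blast
  qed
  moreover have "finite X" using matroid_finite[OF m] X by (rule finite_subset[rotated])
  ultimately show ?thesis
    unfolding rk_def using B by (intro Max_eqI finite_indep_cards) (auto simp: basis_def)
qed

lemma basis_extend:
  assumes m: "matroid E indep" and I: "indep I" "I \<subseteq> X" and X: "X \<subseteq> E"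
  shows "\<exists>K. I \<subseteq> K \<and> basis indep X K"
proof -
  let ?S = "{K. I \<subseteq> K \<and> K \<subseteq> X \<and> indep K}"
  have "finite X" using matroid_finite[OF m] X by (rule finite_subset[rotated])
  moreover have "?S \<subseteq> Pow X" by blast
  ultimately have "finite ?S" by (simp add: finite_subset)
  then obtain K where K: "K \<in> ?S" and max: "\<forall>L\<in>?S. K \<subseteq> L \<longrightarrow> K = L"
    using finite_has_maximal2[of ?S I] I by auto
  have "\<not> indep (insert x K)" if "x \<in> X - K" for x
  proof
    assume "indep (insert x K)"
    then have "insert x K \<in> ?S" using K that by blast
    then show False using max that by blast
  qed
  then show ?thesis using K unfolding basis_def by blast
qed

lemma ex_basis: "matroid E indep \<Longrightarrow> X \<subseteq> E \<Longrightarrow> \<exists>I. basis indep X I"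
  using basis_extend matroid_indep_empty by blast

lemma mem_cl_iff_basis:
  assumes m: "matroid E indep" and Y: "Y \<subseteq> E" and B: "basis indep Y I" and x: "x \<in> E"
  shows "x \<in> cl E indep Y \<longleftrightarrow> x \<in> Y \<or> \<not> indep (insert x I)"
proof -
  have I: "indep I" "I \<subseteq> Y" and max: "\<forall>y\<in>Y - I. \<not> indep (insert y I)"
    using B unfolding basis_def by simp_all
  have fin: "finite (insert x Y)" using matroid_finite[OF m] Y x by (simp add: finite_subset)
  have rkY: "rk indep Y = card I" using rk_basis[OF m Y B] .
  show ?thesis
  proof (cases "x \<in> Y")
    case True
    then show ?thesis using x unfolding cl_def by (simp add: insert_absorb)
  next
    case False
    show ?thesis
    proof
      assume "x \<in> cl E indep Y"
      then have "rk indep (insert x Y) = card I" using rkY unfolding cl_def by simp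
      moreover have "card (insert x I) \<le> rk indep (insert x Y)" if "indep (insert x I)"
        using card_le_rk[of _ indep, OF fin that] I by blast
      moreover have "finite I" "x \<notin> I" using fin I False by (auto intro: finite_subset)
      ultimately show "x \<in> Y \<or> \<not> indep (insert x I)" by auto
    next
      assume "x \<in> Y \<or> \<not> indep (insert x I)"
      then have "basis indep (insert x Y) I" using False I max unfolding basis_def by blast
      then have "rk indep (insert x Y) = card I" using rk_basis[OF m] Y x by simp
      then show "x \<in> cl E indep Y" using rkY x unfolding cl_def by simp
    qed
  qed
qed

lemma cl_subset_ground: "cl E indep Y \<subseteq> E"
  unfolding cl_def by auto

lemma subset_cl: "Y \<subseteq> E \<Longrightarrow> Y \<subseteq> cl E indep Y"
  unfolding cl_def by (auto simp: insert_absorb)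

lemma cl_ground: "cl E indep E = E"
  by (rule equalityI[OF cl_subset_ground subset_cl]) (rule subset_refl)

lemma cl_mono:
  assumes m: "matroid E indep" and ZW: "Z \<subseteq> W" and W: "W \<subseteq> E"
  shows "cl E indep Z \<subseteq> cl E indep W"
proof
  fix x assume x: "x \<in> cl E indep Z"
  have xE: "x \<in> E" using cl_subset_ground x by (rule subsetD)
  have Z: "Z \<subseteq> E" using ZW W by blast
  obtain I where I: "basis indep Z I" using ex_basis[OF m Z] by blast
  have "indep I" "I \<subseteq> W" using I ZW unfolding basis_def by auto
  then obtain K where IK: "I \<subseteq> K" and K: "basis indep W K"
    using basis_extend[OF m _ _ W] by blast
  have "x \<in> Z \<or> \<not> indep (insert x I)" using mem_cl_iff_basis[OF m Z I xE] x by simp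
  then have "x \<in> W \<or> \<not> indep (insert x K)"
    using ZW IK matroid_indep_subset[OF m, of "insert x K" "insert x I"] by blast
  then show "x \<in> cl E indep W" using mem_cl_iff_basis[OF m W K xE] by simp
qed

lemma cl_subset_cl:
  assumes m: "matroid E indep" and Y: "Y \<subseteq> E" and Z: "Z \<subseteq> cl E indep Y"
  shows "cl E indep Z \<subseteq> cl E indep Y"
proof -
  have YZ: "Y \<union> Z \<subseteq> E" using Y Z cl_subset_ground[of E indep Y] by blast
  obtain I where I: "basis indep Y I" using ex_basis[OF m Y] by blast
  have "\<not> indep (insert z I)" if "z \<in> Z - Y" for z
    using mem_cl_iff_basis[OF m Y I] that Z YZ by blast
  then have I': "basis indep (Y \<union> Z) I" using I unfolding basis_def by blast
  have "cl E indep (Y \<union> Z) \<subseteq> cl E indep Y"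
  proof
    fix x assume "x \<in> cl E indep (Y \<union> Z)"
    moreover have "x \<in> E" using cl_subset_ground calculation by (rule subsetD)
    ultimately show "x \<in> cl E indep Y"
      using mem_cl_iff_basis[OF m YZ I'] mem_cl_iff_basis[OF m Y I] Z by blast
  qed
  then show ?thesis using cl_mono[OF m _ YZ, of Z] by blast
qed

lemma cl_subset_cl_iff:
  assumes "matroid E indep" "Y \<subseteq> E" "Z \<subseteq> E"
  shows "cl E indep Z \<subseteq> cl E indep Y \<longleftrightarrow> Z \<subseteq> cl E indep Y"
  using cl_subset_cl[OF assms(1,2)] subset_cl[OF assms(3)] by blast

definition induced_edges :: "nat set set \<Rightarrow> nat set \<Rightarrow> (nat \<times> nat) set" where
  "induced_edges Ed U = {(x, y). x \<in> U \<and> y \<in> U \<and> {x, y} \<in> Ed}"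

lemma induced_connected_iff:
  "induced_connected Ed U \<longleftrightarrow> (\<forall>u\<in>U. \<forall>v\<in>U. (u, v) \<in> (induced_edges Ed U)\<^sup>*)"
  unfolding induced_connected_def induced_edges_def ..

lemma induced_edges_mono:
  "U \<subseteq> W \<Longrightarrow> Ed \<subseteq> Ed' \<Longrightarrow> induced_edges Ed U \<subseteq> induced_edges Ed' W"
  unfolding induced_edges_def by auto

lemma induced_connected_of_pairs:
  assumes "\<And>u v. u \<in> U \<Longrightarrow> v \<in> U \<Longrightarrow> u \<noteq> v \<Longrightarrow>
      \<exists>W\<subseteq>U. u \<in> W \<and> v \<in> W \<and> induced_connected Ed W"
  shows "induced_connected Ed U"
  unfolding induced_connected_iff
proof (intro ballI)
  fix u v assume uv: "u \<in> U" "v \<in> U"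
  show "(u, v) \<in> (induced_edges Ed U)\<^sup>*"
  proof (cases "u = v")
    case False
    then obtain W where "W \<subseteq> U" "u \<in> W" "v \<in> W" "induced_connected Ed W"
      using assms uv by blast
    then show ?thesis
      using rtrancl_mono[OF induced_edges_mono[of W U Ed Ed]] by (auto simp: induced_connected_iff)
  qed simp
qed

lemma induced_connected_insert_edge_outside:
  assumes "i \<notin> U"
  shows "induced_connected (insert {i, j} H) U \<longleftrightarrow> induced_connected H U"
proof -
  have "induced_edges (insert {i, j} H) U = induced_edges H U"
    using assms unfolding induced_edges_def by (auto simp: doubleton_eq_iff)
  then show ?thesis by (simp add: induced_connected_iff)
qed

lemma not_induced_connected_isolated:
  assumes "i \<in> U" "j \<in> U" "i \<noteq> j" "\<forall>ed\<in>H. i \<notin> ed"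
  shows "\<not> induced_connected H U"
proof
  assume "induced_connected H U"
  then have "(i, j) \<in> (induced_edges H U)\<^sup>*" using assms(1,2) by (simp add: induced_connected_iff)
  then show False
    using assms(3,4) by (cases rule: converse_rtranclE) (auto simp: induced_edges_def)
qed

lemma induced_connected_add_leaf:
  assumes i: "i \<notin> U" and j: "j \<in> U" and H: "\<forall>ed\<in>H. i \<notin> ed"
  shows "induced_connected (insert {i, j} H) (insert i U) \<longleftrightarrow> induced_connected H U"
proof -
  let ?R = "induced_edges H U" and ?R' = "induced_edges (insert {i, j} H) (insert i U)"
  define p where "p x = (if x = i then j else x)" for x
  have contract: "(p x, p y) \<in> ?R\<^sup>*" if "(x, y) \<in> ?R'\<^sup>*" for x y
    using that
  proof (induction rule: rtrancl_induct)
    case (step y z)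
    have "(p y, p z) \<in> ?R\<^sup>="
    proof (cases "{y, z} = {i, j}")
      case True
      then have "p y = p z" unfolding p_def by (auto simp: doubleton_eq_iff)
      then show ?thesis by simp
    next
      case False
      then have "{y, z} \<in> H" "y \<in> insert i U" "z \<in> insert i U"
        using step.hyps(2) unfolding induced_edges_def by auto
      moreover from this(1) have "y \<noteq> i" "z \<noteq> i" using H by auto
      ultimately show ?thesis unfolding p_def induced_edges_def by simp
    qed
    then show ?case using step.IH by (auto intro: rtrancl_into_rtrancl)
  qed simp
  show ?thesis
  proof
    assume connected': "induced_connected (insert {i, j} H) (insert i U)"
    show "induced_connected H U"
      unfolding induced_connected_iff
    proof (intro ballI)
      fix u v assume "u \<in> U" "v \<in> U"
      then have "(p u, p v) \<in> ?R\<^sup>*" using connected' contract by (simp add: induced_connected_iff)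
      moreover have "p u = u" "p v = v" using \<open>u \<in> U\<close> \<open>v \<in> U\<close> i unfolding p_def by auto
      ultimately show "(u, v) \<in> ?R\<^sup>*" by simp
    qed
  next
    assume "induced_connected H U"
    then have inU: "(u, v) \<in> ?R'\<^sup>*" if "u \<in> U" "v \<in> U" for u v
      using that rtrancl_mono[OF induced_edges_mono[of U "insert i U" H "insert {i, j} H"]]
      by (auto simp: induced_connected_iff)
    have ij: "(i, j) \<in> ?R'" and ji: "(j, i) \<in> ?R'"
      using j unfolding induced_edges_def by (auto simp: insert_commute)
    have to_j: "(u, j) \<in> ?R'\<^sup>*" and from_j: "(j, u) \<in> ?R'\<^sup>*" if "u \<in> insert i U" for u
      using that inU[OF _ j] inU[OF j] ij ji by auto
    show "induced_connected (insert {i, j} H) (insert i U)"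
      unfolding induced_connected_iff using to_j from_j by (blast intro: rtrancl_trans)
  qed
qed

lemma graph_on_vertex_outside:
  assumes "graph_on V Ed" "i \<notin> V"
  shows "\<forall>ed\<in>Ed. i \<notin> ed"
proof
  fix ed assume "ed \<in> Ed"
  then obtain u v where "ed = {u, v}" "u \<in> V" "v \<in> V" using assms(1) unfolding graph_on_def by blast
  then show "i \<notin> ed" using assms(2) by blast
qed

lemma idxBe_mono: "X \<subseteq> Y \<Longrightarrow> idxBe r B e X \<subseteq> idxBe r B e Y"
  unfolding idxBe_def idxB_def by auto

lemma idxBe_fun_upd:
  "idxBe r (B(i := S)) e X =
     idxBe r B e X - {i} \<union> (if i \<in> {1..r} \<and> S \<subseteq> X \<and> e \<in> S then {i} else {})"
  unfolding idxBe_def idxB_def by auto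

lemma presenting_iff_flats:
  assumes m: "matroid E indep"
  shows "presenting E indep r B e Ed \<longleftrightarrow> graph_on (idxBe r B e E) Ed \<and>
     (\<forall>Y\<subseteq>E. induced_connected Ed (idxBe r B e (cl E indep Y)))"
proof (intro iffI conjI allI impI)
  fix Y assume p: "presenting E indep r B e Ed" and Y: "Y \<subseteq> E"
  show "induced_connected Ed (idxBe r B e (cl E indep Y))"
  proof (rule induced_connected_of_pairs)
    fix u v assume uv: "u \<in> idxBe r B e (cl E indep Y)" "v \<in> idxBe r B e (cl E indep Y)" "u \<noteq> v"
    let ?W = "idxBe r B e (cl E indep (B u \<union> B v))"
    have "B u \<union> B v \<subseteq> cl E indep Y" using uv unfolding idxBe_def idxB_def by auto
    then have W: "?W \<subseteq> idxBe r B e (cl E indep Y)"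
      by (intro idxBe_mono cl_subset_cl[OF m Y])
    have "B u \<union> B v \<subseteq> E"
      using uv cl_subset_ground[of E indep Y] unfolding idxBe_def idxB_def by blast
    then have "B u \<union> B v \<subseteq> cl E indep (B u \<union> B v)" by (rule subset_cl)
    then have "u \<in> ?W" "v \<in> ?W" using uv unfolding idxBe_def idxB_def by blast+
    moreover have "induced_connected Ed ?W"
      using p uv idxBe_mono[OF cl_subset_ground[of E indep Y]] unfolding presenting_def by blast
    ultimately show "\<exists>W\<subseteq>idxBe r B e (cl E indep Y). u \<in> W \<and> v \<in> W \<and> induced_connected Ed W"
      using W by blast
  qed
next
  assume "graph_on (idxBe r B e E) Ed \<and> (\<forall>Y\<subseteq>E. induced_connected Ed (idxBe r B e (cl E indep Y)))"
  then show "presenting E indep r B e Ed"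
    unfolding presenting_def by (auto simp: idxBe_def idxB_def)
qed (simp add: presenting_def)

lemma presenting_cong:
  assumes m: "matroid E indep"
    and flats: "\<And>Y. Y \<subseteq> E \<Longrightarrow> idxBe r B' e (cl E indep Y) = idxBe r B e (cl E indep Y)"
  shows "presenting E indep r B' e Ed \<longleftrightarrow> presenting E indep r B e Ed"
  using flats[of E] by (simp add: presenting_iff_flats[OF m] cl_ground flats)

lemma minimal_presenting_cong:
  assumes "matroid E indep"
    and "\<And>Y. Y \<subseteq> E \<Longrightarrow> idxBe r B' e (cl E indep Y) = idxBe r B e (cl E indep Y)"
  shows "minimal_presenting E indep r B' e Ed \<longleftrightarrow> minimal_presenting E indep r B e Ed"
  unfolding minimal_presenting_def using presenting_cong[OF assms] by simp

lemma presenting_add_leaf: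
  assumes m: "matroid E indep"
    and H: "graph_on (idxBe r B e E) H"
    and i: "i \<notin> idxBe r B e E" "i \<in> idxBe r B' e E"
    and flats: "\<And>Y. Y \<subseteq> E \<Longrightarrow>
      idxBe r B' e (cl E indep Y) = idxBe r B e (cl E indep Y) \<or>
      idxBe r B' e (cl E indep Y) = insert i (idxBe r B e (cl E indep Y)) \<and>
      j \<in> idxBe r B e (cl E indep Y)"
  shows "presenting E indep r B' e (insert {i, j} H) \<longleftrightarrow> presenting E indep r B e H"
proof -
  let ?V = "idxBe r B e E"
  have "idxBe r B' e E = ?V \<or> idxBe r B' e E = insert i ?V \<and> j \<in> ?V"
    using flats[OF subset_refl] by (simp only: cl_ground)
  then have V': "idxBe r B' e E = insert i ?V" and j: "j \<in> ?V" using i by auto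
  have noi: "\<forall>ed\<in>H. i \<notin> ed" using graph_on_vertex_outside[OF H i(1)] .
  have "i \<noteq> j" using i j by blast
  then have graph: "graph_on (idxBe r B' e E) (insert {i, j} H)"
    using H j unfolding V' graph_on_def by blast
  have "induced_connected (insert {i, j} H) (idxBe r B' e (cl E indep Y)) \<longleftrightarrow>
      induced_connected H (idxBe r B e (cl E indep Y))" if Y: "Y \<subseteq> E" for Y
  proof -
    have i_out: "i \<notin> idxBe r B e (cl E indep Y)"
      using i idxBe_mono[OF cl_subset_ground[of E indep Y]] by blast
    from flats[OF Y] show ?thesis
    proof
      assume "idxBe r B' e (cl E indep Y) = idxBe r B e (cl E indep Y)"
      then show ?thesis using induced_connected_insert_edge_outside[OF i_out] by simp
    next
      assume "idxBe r B' e (cl E indep Y) = insert i (idxBe r B e (cl E indep Y)) \<and>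
        j \<in> idxBe r B e (cl E indep Y)"
      then show ?thesis using induced_connected_add_leaf[OF i_out _ noi] by simp
    qed
  qed
  then show ?thesis using graph H by (simp add: presenting_iff_flats[OF m])
qed

lemma minimal_presenting_add_leaf:
  assumes m: "matroid E indep"
    and G: "minimal_presenting E indep r B e G"
    and i: "i \<notin> idxBe r B e E" "i \<in> idxBe r B' e E"
    and flats: "\<And>Y. Y \<subseteq> E \<Longrightarrow>
      idxBe r B' e (cl E indep Y) = idxBe r B e (cl E indep Y) \<or>
      idxBe r B' e (cl E indep Y) = insert i (idxBe r B e (cl E indep Y)) \<and>
      j \<in> idxBe r B e (cl E indep Y)"
  shows "minimal_presenting E indep r B' e (insert {i, j} G)"
  unfolding minimal_presenting_def
proof (intro conjI ballI)
  have graph: "graph_on (idxBe r B e E) G" using G unfolding minimal_presenting_def presenting_def by blast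
  then have noi: "\<forall>ed\<in>G. i \<notin> ed" using graph_on_vertex_outside i(1) by blast
  have graph_del: "graph_on (idxBe r B e E) (G - {ed})" for ed
    using graph unfolding graph_on_def by blast
  show "presenting E indep r B' e (insert {i, j} G)"
    using presenting_add_leaf[OF m graph i flats] G unfolding minimal_presenting_def by blast
  fix ed assume ed: "ed \<in> insert {i, j} G"
  show "\<not> presenting E indep r B' e (insert {i, j} G - {ed})"
  proof (cases "ed = {i, j}")
    case True
    have "idxBe r B' e E = idxBe r B e E \<or>
        idxBe r B' e E = insert i (idxBe r B e E) \<and> j \<in> idxBe r B e E"
      using flats[OF subset_refl] by (simp only: cl_ground)
    then have j: "j \<in> idxBe r B e E" "j \<in> idxBe r B' e E" using i by auto
    then have ij: "i \<noteq> j" using i by blast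
    let ?F = "cl E indep (B' i \<union> B' j)"
    have "B' i \<union> B' j \<subseteq> E" using i j unfolding idxBe_def idxB_def by blast
    then have "B' i \<union> B' j \<subseteq> ?F" by (rule subset_cl)
    then have "i \<in> idxBe r B' e ?F" "j \<in> idxBe r B' e ?F"
      using i j unfolding idxBe_def idxB_def by blast+
    then have "\<not> induced_connected G (idxBe r B' e ?F)"
      using not_induced_connected_isolated ij noi by blast
    then have "\<not> presenting E indep r B' e G"
      using i(2) j(2) ij unfolding presenting_def by blast
    moreover have "insert {i, j} G - {ed} = G" using True noi by auto
    ultimately show ?thesis by simp
  next
    case False
    then have "ed \<in> G" and "insert {i, j} G - {ed} = insert {i, j} (G - {ed})" using ed by auto
    then show ?thesis
      using presenting_add_leaf[OF m graph_del i flats] G unfolding minimal_presenting_def by simp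
  qed
qed

lemma idxBe_update_cl:
  assumes m: "matroid E indep" and i: "i \<in> {1..r}" and Ai: "A i \<subseteq> E" and Y: "Y \<subseteq> E"
  shows "idxBe r (A(i := cl E indep (A i))) e (cl E indep Y) = idxBe r A e (cl E indep Y) - {i} \<union>
    (if A i \<subseteq> cl E indep Y \<and> e \<in> cl E indep (A i) then {i} else {})"
  using i cl_subset_cl_iff[OF m Y Ai] by (simp add: idxBe_fun_upd)

lemma idxBe_update_cl_unchanged:
  assumes m: "matroid E indep" and i: "i \<in> {1..r}" and Ai: "A i \<subseteq> E"
    and e: "e \<notin> cl E indep (A i) - A i" and Y: "Y \<subseteq> E"
  shows "idxBe r (A(i := cl E indep (A i))) e (cl E indep Y) = idxBe r A e (cl E indep Y)"
proof -
  have "e \<in> cl E indep (A i) \<longleftrightarrow> e \<in> A i" using e subset_cl[OF Ai] by blast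
  moreover have "i \<in> idxBe r A e (cl E indep Y) \<longleftrightarrow> A i \<subseteq> cl E indep Y \<and> e \<in> A i"
    using i by (simp add: idxBe_def idxB_def)
  ultimately show ?thesis using idxBe_update_cl[where A = A, OF m i Ai Y] by auto
qed

lemma idxBe_update_cl_leaf:
  assumes m: "matroid E indep" and i: "i \<in> {1..r}" and Ai: "A i \<subseteq> E"
    and e: "e \<in> cl E indep (A i) - A i" and j: "j \<in> idxBe r A e (cl E indep (A i))"
    and Y: "Y \<subseteq> E"
  shows "idxBe r (A(i := cl E indep (A i))) e (cl E indep Y) = idxBe r A e (cl E indep Y) \<or>
    idxBe r (A(i := cl E indep (A i))) e (cl E indep Y) = insert i (idxBe r A e (cl E indep Y)) \<and>
    j \<in> idxBe r A e (cl E indep Y)"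
proof -
  have "j \<in> idxBe r A e (cl E indep Y)" if "A i \<subseteq> cl E indep Y"
    using j idxBe_mono[OF cl_subset_cl[OF m Y that]] by blast
  moreover have "i \<notin> idxBe r A e (cl E indep Y)" using e by (simp add: idxBe_def)
  ultimately show ?thesis using idxBe_update_cl[where A = A, OF m i Ai Y] e by auto
qed

theorem lemma3p6:
  fixes E :: "'a set" and indep :: "'a set \<Rightarrow> bool" and r :: nat
    and A :: "nat \<Rightarrow> 'a set" and e :: 'a and G :: "nat set set" and i :: nat
  assumes "matroid E indep"
    and "dual_presentation E indep r A"
    and "e \<in> E"
    and "minimal_presenting E indep r A e G"
    and "i \<in> {1..r}"
  shows "(e \<notin> cl E indep (A i) - A i \<longrightarrow>
            minimal_presenting E indep r (A(i := cl E indep (A i))) e G)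
       \<and> (e \<in> cl E indep (A i) - A i \<longrightarrow>
            (\<forall>j\<in>idxBe r A e (cl E indep (A i)).
               minimal_presenting E indep r (A(i := cl E indep (A i))) e (insert {i, j} G)))"
proof -
  note m = assms(1) and i = assms(5)
  have "\<forall>k\<in>{1..r}. A k \<subseteq> E" using assms(2) unfolding dual_presentation_def by (rule conjunct1)
  then have Ai: "A i \<subseteq> E" using i by blast
  have "minimal_presenting E indep r (A(i := cl E indep (A i))) e G"
    if "e \<notin> cl E indep (A i) - A i"
    using minimal_presenting_cong[OF m idxBe_update_cl_unchanged[where A = A, OF m i Ai that]] assms(4) by simp
  moreover have "minimal_presenting E indep r (A(i := cl E indep (A i))) e (insert {i, j} G)"
    if e: "e \<in> cl E indep (A i) - A i" and j: "j \<in> idxBe r A e (cl E indep (A i))" for j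
  proof (rule minimal_presenting_add_leaf[OF m assms(4) _ _ idxBe_update_cl_leaf[where A = A, OF m i Ai e j]])
    show "i \<notin> idxBe r A e E" using e by (simp add: idxBe_def)
    show "i \<in> idxBe r (A(i := cl E indep (A i))) e E"
      using e i cl_subset_ground[of E indep "A i"] by (simp add: idxBe_def idxB_def)
  qed
  ultimately show ?thesis by blast
qed

end
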